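(* Let $a\in(0,1.8]$ and $b>0$. Every right-angled triangle in the hyperbolic plane $\mathbb{H}^2$ (of curvature $-1$) whose two sides adjacent to the right angle have lengths $a$ and $b$ has area at least $\frac{a}{5}\cdot\min\{b,\pi\}$.
   Context: $\mathbb{H}^2$ is the hyperbolic plane of Gaussian curvature $-1$; lengths and areas are hyperbolic. *)

theory Defs
  imports "HOL-Analysis.Analysis"
begin

text \<open>The hyperbolic plane of curvature -1, realised in the Beltrami--Klein model:
  points are the points of the open unit disc (complex numbers of norm < 1),
  geodesics are Euclidean chords, so the geodesic triangle with vertices A, B, C is
  the Euclidean convex hull of the three points.\<close>

definition klein_disc :: "complex set" where
  "klein_disc = ball 0 1"

definition klein_dist :: "complex \<Rightarrow> complex \<Rightarrow> real" where
  "klein_dist u v = arcosh ((1 - u \<bullet> v) / sqrt ((1 - (norm u)\<^sup>2) * (1 - (norm v)\<^sup>2)))"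

definition klein_metric :: "complex \<Rightarrow> complex \<Rightarrow> complex \<Rightarrow> real" where
  "klein_metric x v w =
     (v \<bullet> w) / (1 - (norm x)\<^sup>2) + (x \<bullet> v) * (x \<bullet> w) / (1 - (norm x)\<^sup>2)\<^sup>2"

text \<open>Hyperbolic area: Riemannian area density (1-|x|^2)^(-3/2) of the Klein metric.\<close>
definition hyp_area :: "complex set \<Rightarrow> real" where
  "hyp_area S = integral S (\<lambda>x. 1 / (1 - (norm x)\<^sup>2) powr (3/2))"

definition hyp_triangle :: "complex \<Rightarrow> complex \<Rightarrow> complex \<Rightarrow> complex set" where
  "hyp_triangle A B C = convex hull {A, B, C}"

end

(*
  Lift the Klein model to the hyperboloid model, where the right angle at C becomes
  Pythagoras' theorem cosh |AB| = cosh |CA| * cosh |CB|. Replacing B by the point D of the leg CB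
  at distance beta = min b pi from C gives a right triangle ACD inside ABC. Parametrising ACD by
  the unit square through the cone over the lifts of A, C and D and changing variables turns its
  area into an elementary double integral, and Fubini gives
  area ACD = 2 arctan (tanh (a/2) * tanh (beta/2)). For a <= 1.8 and beta <= pi this is at least
  a * beta / 5, by the monotonicity of tanh x / x and Taylor bounds for exp and arctan.
*)

theory Submission
  imports Defs
begin

section \<open>Real-variable estimates\<close>

lemma powr_three_halves: "0 < (x::real) \<Longrightarrow> x powr (3/2) = x * sqrt x"
  by (simp add: powr_add[of x 1 "1/2", simplified] powr_half_sqrt)

lemma tanh_half: "tanh ((x::real) / 2) = sinh x / (cosh x + 1)"
proof -
  have "sinh x = 2 * sinh (x/2) * cosh (x/2)" "cosh x + 1 = 2 * cosh (x/2) ^ 2"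
    using sinh_double[of "x/2"] cosh_double_cosh[of "x/2"] by simp_all
  then show ?thesis
    by (simp add: tanh_def power2_eq_square)
qed

lemma arctan_diff_nonneg:
  fixes x y :: real
  assumes "0 \<le> x" "0 \<le> y"
  shows "arctan x - arctan y = arctan ((x - y) / (1 + x * y))"
proof (rule arctan_unique[symmetric])
  have "0 \<le> arctan x" "0 \<le> arctan y"
    using assms by simp_all
  then show "- (pi/2) < arctan x - arctan y" "arctan x - arctan y < pi/2"
    using arctan_ubound[of x] arctan_ubound[of y] by linarith+
  then have "cos (arctan x - arctan y) \<noteq> 0"
    by (intro cos_gt_zero_pi[THEN less_imp_neq, symmetric])
  then show "tan (arctan x - arctan y) = (x - y) / (1 + x * y)"
    by (simp add: tan_diff tan_arctan)
qed

lemma arctan_diff_right_triangle: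
  fixes \<alpha> \<beta> :: real
  assumes "0 < \<alpha>" "0 < \<beta>"
  shows "arctan (sinh \<alpha> * cosh \<beta> / sinh \<beta>) - arctan (sinh \<alpha> / (cosh \<alpha> * sinh \<beta>))
    = arctan (sinh \<alpha> * sinh \<beta> / (cosh \<alpha> + cosh \<beta>))"
proof -
  define ca sa cb sb where "ca = cosh \<alpha>" "sa = sinh \<alpha>" "cb = cosh \<beta>" "sb = sinh \<beta>"
  have pos: "0 < sa" "0 < sb" "1 < ca" "1 < cb"
    using assms cosh_real_nonneg_less_iff[of 0 \<alpha>] cosh_real_nonneg_less_iff[of 0 \<beta>]
    by (simp_all add: ca_sa_cb_sb_def)
  define K where "K = ca * cb - 1"
  have "0 < K"
    using pos mult_strict_mono[of 1 ca 1 cb] by (simp add: K_def)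
  have "1 + sa * cb / sb * (sa / (ca * sb)) = (ca * sb\<^sup>2 + sa\<^sup>2 * cb) / (ca * sb\<^sup>2)"
    using pos by (simp add: field_simps power2_eq_square)
  also have "ca * sb\<^sup>2 + sa\<^sup>2 * cb = (ca + cb) * K"
    unfolding K_def ca_sa_cb_sb_def sinh_square_eq by (simp add: algebra_simps power2_eq_square)
  finally have den: "1 + sa * cb / sb * (sa / (ca * sb)) = (ca + cb) * K / (ca * sb\<^sup>2)" .
  have num: "sa * cb / sb - sa / (ca * sb) = sa * K / (ca * sb)"
    using pos by (simp add: K_def field_simps)
  have quotient: "(sa * cb / sb - sa / (ca * sb)) / (1 + sa * cb / sb * (sa / (ca * sb)))
      = sa * sb / (ca + cb)"
    unfolding num den using pos \<open>0 < K\<close> by (simp add: divide_simps power2_eq_square)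
  have "arctan (sa * cb / sb) - arctan (sa / (ca * sb))
      = arctan ((sa * cb / sb - sa / (ca * sb)) / (1 + sa * cb / sb * (sa / (ca * sb))))"
    using pos by (intro arctan_diff_nonneg) auto
  also have "\<dots> = arctan (sa * sb / (ca + cb))"
    unfolding quotient ..
  finally show ?thesis
    unfolding ca_sa_cb_sb_def .
qed

lemma double_arctan_tanh_half_product:
  fixes \<alpha> \<beta> :: real
  assumes "0 < \<alpha>" "0 < \<beta>"
  shows "2 * arctan (tanh (\<alpha>/2) * tanh (\<beta>/2)) = arctan (sinh \<alpha> * sinh \<beta> / (cosh \<alpha> + cosh \<beta>))"
proof -
  define t where "t = tanh (\<alpha>/2) * tanh (\<beta>/2)"
  have "0 < tanh (\<alpha>/2)" "tanh (\<alpha>/2) < 1" "0 < tanh (\<beta>/2)" "tanh (\<beta>/2) < 1"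
    using assms by (simp_all add: tanh_real_lt_1)
  then have "\<bar>t\<bar> < 1"
    using mult_strict_mono'[of "tanh (\<alpha>/2)" 1 "tanh (\<beta>/2)" 1] by (simp add: t_def)
  define N P where "N = sinh \<alpha> * sinh \<beta>" "P = (cosh \<alpha> + 1) * (cosh \<beta> + 1)"
  have "0 < P" "0 < cosh \<alpha> + cosh \<beta>"
    by (simp_all add: N_P_def add_pos_pos)
  have diff_sq: "P\<^sup>2 - N\<^sup>2 = 2 * P * (cosh \<alpha> + cosh \<beta>)"
    unfolding N_P_def power_mult_distrib sinh_square_eq by (simp add: algebra_simps power2_eq_square)
  have "0 < P\<^sup>2 - N\<^sup>2"
    using \<open>0 < P\<close> \<open>0 < cosh \<alpha> + cosh \<beta>\<close> unfolding diff_sq by simp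
  moreover have t_eq: "t = N / P"
    by (simp add: t_def tanh_half N_P_def)
  ultimately have "2 * t / (1 - t\<^sup>2) = 2 * N * P / (P\<^sup>2 - N\<^sup>2)"
    using \<open>0 < P\<close> unfolding t_eq by (simp add: field_simps power2_eq_square)
  also have "\<dots> = (2 * P) * N / ((2 * P) * (cosh \<alpha> + cosh \<beta>))"
    unfolding diff_sq by (simp add: mult_ac)
  also have "\<dots> = N / (cosh \<alpha> + cosh \<beta>)"
    using \<open>0 < P\<close> by (subst mult_divide_mult_cancel_left) auto
  finally show ?thesis
    using arctan_double[OF \<open>\<bar>t\<bar> < 1\<close>] by (simp add: t_def N_P_def)
qed

lemma arctan_right_triangle_identity:
  fixes \<alpha> \<beta> :: real
  assumes "0 < \<alpha>" "0 < \<beta>"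
  shows "arctan (sinh \<alpha> * cosh \<beta> / sinh \<beta>) - arctan (sinh \<alpha> / (cosh \<alpha> * sinh \<beta>))
    = 2 * arctan (tanh (\<alpha>/2) * tanh (\<beta>/2))"
  using assms by (simp add: arctan_diff_right_triangle double_arctan_tanh_half_product)

lemma mult_one_minus_tanh_sq_le_tanh:
  fixes u :: real
  assumes "0 \<le> u"
  shows "u * (1 - (tanh u)\<^sup>2) \<le> tanh u"
proof -
  let ?g = "\<lambda>u::real. tanh u - u * (1 - (tanh u)\<^sup>2)"
  have "?g 0 \<le> ?g u"
  proof (rule DERIV_nonneg_imp_nondecreasing[OF assms])
    fix x :: real
    assume "0 \<le> x"
    have "(?g has_real_derivative 2 * x * tanh x * (1 - (tanh x)\<^sup>2)) (at x)"
      by (auto intro!: derivative_eq_intros simp: algebra_simps power2_eq_square)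
    moreover have "(tanh x)\<^sup>2 \<le> 1"
      using tanh_real_bounds[of x] by (auto simp: abs_square_le_1 abs_le_iff)
    then have "0 \<le> 2 * x * tanh x * (1 - (tanh x)\<^sup>2)"
      using \<open>0 \<le> x\<close> by simp
    ultimately show "\<exists>y. (?g has_real_derivative y) (at x) \<and> 0 \<le> y"
      by blast
  qed
  then show ?thesis
    by simp
qed

lemma tanh_div_antimono:
  fixes x y :: real
  assumes "0 < x" "x \<le> y"
  shows "tanh y / y \<le> tanh x / x"
proof (rule DERIV_nonpos_imp_nonincreasing[OF assms(2)])
  fix t :: real
  assume "x \<le> t"
  then have "0 < t"
    using assms by simp
  have "((\<lambda>u. tanh u / u) has_real_derivative (t * (1 - (tanh t)\<^sup>2) - tanh t) / t\<^sup>2) (at t)"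
    using \<open>0 < t\<close> by (auto intro!: derivative_eq_intros simp: power2_eq_square algebra_simps)
  moreover have "(t * (1 - (tanh t)\<^sup>2) - tanh t) / t\<^sup>2 \<le> 0"
    using mult_one_minus_tanh_sq_le_tanh[of t] \<open>0 < t\<close> by (simp add: divide_nonpos_pos)
  ultimately show "\<exists>d. ((\<lambda>u. tanh u / u) has_real_derivative d) (at t) \<and> d \<le> 0"
    by blast
qed

lemma tanh_ge_linear:
  fixes x X :: real
  assumes "0 < x" "x \<le> X"
  shows "x * (tanh X / X) \<le> tanh x"
  using tanh_div_antimono[OF assms] assms(1) by (simp add: field_simps)

lemma exp_ge_taylor:
  fixes x :: real
  assumes "0 \<le> x"
  shows "(\<Sum>m<n. x ^ m / fact m) \<le> exp x"
proof -
  obtain t where "exp x = (\<Sum>m<n. x ^ m / fact m) + exp t / fact n * x ^ n"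
    using Maclaurin_exp_le by blast
  moreover have "0 \<le> exp t / fact n * x ^ n"
    using assms by simp
  ultimately show ?thesis
    by linarith
qed

lemma tanh_eq_exp: "tanh (x::real) = (exp (2 * x) - 1) / (exp (2 * x) + 1)"
proof -
  define E where "E = exp x"
  have exp_E: "exp (2 * x) = E * E" "exp (- x) = inverse E"
    by (simp_all add: E_def exp_add[symmetric] exp_minus)
  have "0 < E" "0 < E * E + 1" "0 < E + E * (E * E)"
    by (simp_all add: E_def add_nonneg_pos add_pos_pos)
  then show ?thesis
    unfolding tanh_altdef E_def[symmetric] exp_E by (simp add: field_simps)
qed

lemma tanh_ge_of_exp_ge:
  fixes x c e :: real
  assumes "e \<le> exp (2 * x)" "c \<le> (e - 1) / (e + 1)" "0 < e"
  shows "c \<le> tanh x"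
proof -
  have "(e - 1) / (e + 1) \<le> (exp (2 * x) - 1) / (exp (2 * x) + 1)"
    using assms by (simp add: frac_le_eq field_simps)
  then show ?thesis
    using assms(2) by (simp add: tanh_eq_exp)
qed

lemma tanh_nine_tenths_ge: "0.71 \<le> tanh (0.9::real)"
proof (rule tanh_ge_of_exp_ge)
  have "(\<Sum>m<8. (1.8::real) ^ m / fact m) \<le> exp 1.8"
    by (rule exp_ge_taylor) simp
  then show "5.9 \<le> exp (2 * (0.9::real))"
    by (simp add: eval_nat_numeral fact_numeral)
qed simp_all

lemma tanh_pi_half_ge: "0.915 \<le> tanh (pi/2)"
proof -
  have "0.915 \<le> tanh (1.57::real)"
  proof (rule tanh_ge_of_exp_ge)
    have "(\<Sum>m<10. (3.14::real) ^ m / fact m) \<le> exp 3.14"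
      by (rule exp_ge_taylor) simp
    then show "22.6 \<le> exp (2 * (1.57::real))"
      by (simp add: eval_nat_numeral fact_numeral)
  qed simp_all
  also have "tanh 1.57 \<le> tanh (pi/2)"
    using pi_approx by simp
  finally show ?thesis .
qed

lemma arctan_ge_taylor:
  fixes z :: real
  assumes "0 \<le> z"
  shows "z - z^3/3 + z^5/5 - z^7/7 \<le> arctan z"
proof -
  let ?h = "\<lambda>u::real. arctan u - (u - u^3/3 + u^5/5 - u^7/7)"
  have "?h 0 \<le> ?h z"
  proof (rule DERIV_nonneg_imp_nondecreasing[OF assms])
    fix x :: real
    have "1 + x\<^sup>2 \<noteq> 0"
      by (metis power_one sum_power2_eq_zero_iff zero_neq_one)
    then have "(?h has_real_derivative x^8 / (1 + x\<^sup>2)) (at x)"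
      by (auto intro!: derivative_eq_intros simp: field_simps eval_nat_numeral)
    then show "\<exists>y. (?h has_real_derivative y) (at x) \<and> 0 \<le> y"
      by (intro exI conjI) auto
  qed
  then show ?thesis
    by simp
qed

lemma arctan_taylor_ge_linear:
  fixes z :: real
  assumes "0 \<le> z" "z \<le> 0.6497"
  shows "0.8705 * z \<le> z - z^3/3 + z^5/5 - z^7/7"
proof -
  define w where "w = z\<^sup>2"
  have "0 \<le> w" "w \<le> 0.4222"
    using assms power_mono[of z "0.6497" 2] by (simp_all add: w_def power2_eq_square)
  \<comment> \<open>\<open>w\<^sup>2/5 - w\<^sup>3/7 \<ge> 0.1396 w\<^sup>2\<close>, and the resulting quadratic is decreasing on \<open>[0, 0.4222]\<close>\<close>
  have "w^3 \<le> 0.4222 * w\<^sup>2"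
    using \<open>0 \<le> w\<close> \<open>w \<le> 0.4222\<close> mult_right_mono[of w "0.4222" "w\<^sup>2"]
    by (simp add: power3_eq_cube power2_eq_square)
  moreover have "0 \<le> (0.4222 - w) * (1/3 - 0.1396 * (0.4222 + w))"
    using \<open>0 \<le> w\<close> \<open>w \<le> 0.4222\<close> by (intro mult_nonneg_nonneg) auto
  then have "0 \<le> 0.1396 * w\<^sup>2 - w/3 + (0.4222/3 - 0.1396 * 0.4222\<^sup>2)"
    by (simp add: field_simps power2_eq_square)
  ultimately have "0 \<le> 0.1295 - w/3 + w\<^sup>2/5 - w^3/7"
    by (simp add: power2_eq_square) (use zero_le_square[of w] in linarith)
  then have "0 \<le> z * (0.1295 - w/3 + w\<^sup>2/5 - w^3/7)"
    using assms by simp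
  moreover have "z * (0.1295 - w/3 + w\<^sup>2/5 - w^3/7) = z - z^3/3 + z^5/5 - z^7/7 - 0.8705 * z"
    by (simp add: w_def algebra_simps eval_nat_numeral)
  ultimately show ?thesis
    by linarith
qed

lemma tanh_half_product_ge:
  fixes a b :: real
  assumes a: "0 < a" "a \<le> 1.8" and b: "0 < b" "b \<le> pi"
  shows "(0.71/1.8) * (0.915/3.1416) * a * b \<le> tanh (a/2) * tanh (b/2)"
proof -
  have "(a/2) * (0.71/0.9) \<le> (a/2) * (tanh 0.9 / 0.9)"
    using tanh_nine_tenths_ge a by (intro mult_left_mono) auto
  also have "\<dots> \<le> tanh (a/2)"
    using a by (intro tanh_ge_linear) auto
  finally have tanh_a: "(a/2) * (0.71/0.9) \<le> tanh (a/2)" .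
  have "(b/2) * (0.915/(3.1416/2)) \<le> (b/2) * (0.915/(pi/2))"
    using b pi_approx by (intro mult_left_mono divide_left_mono) auto
  also have "\<dots> \<le> (b/2) * (tanh (pi/2) / (pi/2))"
    using tanh_pi_half_ge b by (intro mult_left_mono divide_right_mono) auto
  also have "\<dots> \<le> tanh (b/2)"
    using b by (intro tanh_ge_linear) auto
  finally have tanh_b: "(b/2) * (0.915/(3.1416/2)) \<le> tanh (b/2)" .
  have "(0.71/1.8) * (0.915/3.1416) * a * b = ((a/2) * (0.71/0.9)) * ((b/2) * (0.915/(3.1416/2)))"
    by simp
  also have "\<dots> \<le> tanh (a/2) * tanh (b/2)"
    using tanh_a tanh_b a b by (intro mult_mono) auto
  finally show ?thesis .
qed

lemma two_arctan_tanh_product_ge: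
  fixes a b :: real
  assumes a: "0 < a" "a \<le> 1.8" and b: "0 < b" "b \<le> pi"
  shows "a * b / 5 \<le> 2 * arctan (tanh (a/2) * tanh (b/2))"
proof -
  define z where "z = (0.71/1.8) * (0.915/3.1416) * a * b"
  have "0 \<le> z"
    using a b by (simp add: z_def)
  have "a * b \<le> 1.8 * 3.1416"
    using a b pi_approx mult_mono[of a "1.8" b "3.1416"] by simp
  then have "z \<le> 0.6497"
    by (simp add: z_def)
  \<comment> \<open>\<open>0.8705\<close> is just large enough that \<open>2 \<cdot> 0.8705 \<cdot> z \<ge> a b / 5\<close>\<close>
  have "a * b / 5 \<le> 2 * (0.8705 * z)"
    using a b by (simp add: z_def)
  also have "\<dots> \<le> 2 * (z - z^3/3 + z^5/5 - z^7/7)"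
    using arctan_taylor_ge_linear[OF \<open>0 \<le> z\<close> \<open>z \<le> 0.6497\<close>] by simp
  also have "\<dots> \<le> 2 * arctan z"
    using arctan_ge_taylor[OF \<open>0 \<le> z\<close>] by simp
  also have "\<dots> \<le> 2 * arctan (tanh (a/2) * tanh (b/2))"
    using tanh_half_product_ge[OF a b] by (simp add: z_def arctan_le_iff)
  finally show ?thesis .
qed

lemma has_real_derivative_inv_powr_three_halves_primitive:
  fixes A B x :: real
  assumes "0 < A" "0 < A - B * x\<^sup>2"
  shows "((\<lambda>q. q / (A * sqrt (A - B * q\<^sup>2))) has_real_derivative 1 / (A - B * x\<^sup>2) powr (3/2)) (at x)"
proof -
  define D where "D = A - B * x\<^sup>2"
  have "0 < D" "sqrt D * sqrt D = D" "0 < sqrt D"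
    using assms by (simp_all add: D_def)
  have "((\<lambda>q. q / (A * sqrt (A - B * q\<^sup>2))) has_real_derivative
      (A * sqrt D - x * (A * (inverse (sqrt D) / 2 * (- (B * (2 * x)))))) / (A * sqrt D)\<^sup>2) (at x)"
    using assms unfolding D_def by (auto intro!: derivative_eq_intros simp: power2_eq_square)
  also have "(A * sqrt D - x * (A * (inverse (sqrt D) / 2 * (- (B * (2 * x)))))) / (A * sqrt D)\<^sup>2
      = 1 / D powr (3/2)"
  proof -
    have A: "A = D + B * (x * x)"
      by (simp add: D_def power2_eq_square)
    show ?thesis
      using \<open>0 < A\<close> \<open>sqrt D * sqrt D = D\<close> \<open>0 < sqrt D\<close> unfolding powr_three_halves[OF \<open>0 < D\<close>]
      by (simp add: field_simps power2_eq_square) (simp add: A algebra_simps)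
  qed
  finally show ?thesis
    by (simp add: D_def)
qed

lemma has_integral_inv_powr_three_halves:
  fixes A B :: real
  assumes "0 \<le> B" "B < A"
  shows "((\<lambda>q. 1 / (A - B * q\<^sup>2) powr (3/2)) has_integral 1 / (A * sqrt (A - B))) {0..1}"
proof -
  have pos: "0 < A - B * q\<^sup>2" if "q \<in> {0..1}" for q
  proof -
    have "B * q\<^sup>2 \<le> B"
      using that assms by (simp add: mult_left_le power_le_one)
    then show ?thesis
      using assms by linarith
  qed
  have "((\<lambda>q. 1 / (A - B * q\<^sup>2) powr (3/2)) has_integral
      1 / (A * sqrt (A - B * 1\<^sup>2)) - 0 / (A * sqrt (A - B * 0\<^sup>2))) {0..1}"
  proof (intro fundamental_theorem_of_calculus)
    fix x :: real
    assume "x \<in> {0..1}"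
    then have "((\<lambda>q. q / (A * sqrt (A - B * q\<^sup>2))) has_real_derivative 1 / (A - B * x\<^sup>2) powr (3/2)) (at x)"
      using assms pos by (intro has_real_derivative_inv_powr_three_halves_primitive) auto
    then show "((\<lambda>q. q / (A * sqrt (A - B * q\<^sup>2))) has_vector_derivative 1 / (A - B * x\<^sup>2) powr (3/2))
        (at x within {0..1})"
      by (simp add: has_real_derivative_iff_has_vector_derivative[symmetric] has_field_derivative_at_within)
  qed simp
  then show ?thesis
    by simp
qed

lemma has_real_derivative_arctan_primitive:
  fixes \<alpha> m x :: real
  assumes "0 < \<alpha>" "0 < m" "0 < 1 - \<alpha> * (1 + m\<^sup>2) * x\<^sup>2"
  shows "((\<lambda>p. - arctan (sqrt (1 - \<alpha> * (1 + m\<^sup>2) * p\<^sup>2) / m)) has_real_derivative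
    m * \<alpha> * x / ((1 - \<alpha> * x\<^sup>2) * sqrt (1 - \<alpha> * (1 + m\<^sup>2) * x\<^sup>2))) (at x)"
proof -
  define s D where "s = \<alpha> * (1 + m\<^sup>2)" and "D = 1 - \<alpha> * (1 + m\<^sup>2) * x\<^sup>2"
  have "0 < s" "0 < D" "0 < sqrt D"
    using assms by (simp_all add: s_def D_def add_pos_nonneg)
  have "\<alpha> * x\<^sup>2 \<le> \<alpha> * (1 + m\<^sup>2) * x\<^sup>2"
    using assms by (simp add: mult_right_mono)
  then have "0 < 1 - \<alpha> * x\<^sup>2"
    using assms by linarith
  have "((\<lambda>p. - arctan (sqrt (1 - \<alpha> * (1 + m\<^sup>2) * p\<^sup>2) / m)) has_real_derivative
      inverse (1 + D / (m * m)) * (inverse (sqrt D) * (x * s)) / m) (at x)"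
    using assms unfolding s_def D_def by (auto intro!: derivative_eq_intros simp: power2_eq_square)
  also have "inverse (1 + D / (m * m)) * (inverse (sqrt D) * (x * s)) / m
      = m * \<alpha> * x / ((1 - \<alpha> * x\<^sup>2) * sqrt D)"
  proof -
    have denom: "1 + D / (m * m) = s * (1 - \<alpha> * x\<^sup>2) / (\<alpha> * (m * m))"
      using assms by (simp add: D_def s_def field_simps power2_eq_square)
    show ?thesis
      unfolding denom using assms \<open>0 < s\<close> \<open>0 < sqrt D\<close> \<open>0 < 1 - \<alpha> * x\<^sup>2\<close> by (simp add: field_simps)
  qed
  finally show ?thesis
    by (simp add: D_def)
qed

lemma has_integral_arctan_primitive:
  fixes \<alpha> m :: real
  assumes "0 < \<alpha>" "0 < m" "\<alpha> * (1 + m\<^sup>2) < 1"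
  shows "((\<lambda>p. m * \<alpha> * p / ((1 - \<alpha> * p\<^sup>2) * sqrt (1 - \<alpha> * (1 + m\<^sup>2) * p\<^sup>2)))
    has_integral arctan (1/m) - arctan (sqrt (1 - \<alpha> * (1 + m\<^sup>2)) / m)) {0..1}"
proof -
  have pos: "0 < 1 - \<alpha> * (1 + m\<^sup>2) * p\<^sup>2" if "p \<in> {0..1}" for p
  proof -
    have "\<alpha> * (1 + m\<^sup>2) * p\<^sup>2 \<le> \<alpha> * (1 + m\<^sup>2)"
      using that assms by (intro mult_left_le) (auto simp: power_le_one)
    then show ?thesis
      using assms by linarith
  qed
  have "((\<lambda>p. m * \<alpha> * p / ((1 - \<alpha> * p\<^sup>2) * sqrt (1 - \<alpha> * (1 + m\<^sup>2) * p\<^sup>2))) has_integral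
      - arctan (sqrt (1 - \<alpha> * (1 + m\<^sup>2) * 1\<^sup>2) / m) - - arctan (sqrt (1 - \<alpha> * (1 + m\<^sup>2) * 0\<^sup>2) / m)) {0..1}"
  proof (intro fundamental_theorem_of_calculus)
    fix x :: real
    assume "x \<in> {0..1}"
    with assms pos show "((\<lambda>p. - arctan (sqrt (1 - \<alpha> * (1 + m\<^sup>2) * p\<^sup>2) / m)) has_vector_derivative
        m * \<alpha> * x / ((1 - \<alpha> * x\<^sup>2) * sqrt (1 - \<alpha> * (1 + m\<^sup>2) * x\<^sup>2))) (at x within {0..1})"
      by (simp add: has_real_derivative_iff_has_vector_derivative[symmetric] has_field_derivative_at_within
          has_real_derivative_arctan_primitive)
  qed simp
  then show ?thesis
    by simp
qed

section \<open>Integration in the plane\<close>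

definition complex_of_vec2 :: "real^2 \<Rightarrow> complex" where
  "complex_of_vec2 v = Complex (v$1) (v$2)"

definition vec2_of_complex :: "complex \<Rightarrow> real^2" where
  "vec2_of_complex z = vector [Re z, Im z]"

definition vec2_of_pair :: "real \<times> real \<Rightarrow> real^2" where
  "vec2_of_pair x = vector [fst x, snd x]"

lemma vec2_eq_iff: "(v::real^2) = w \<longleftrightarrow> v$1 = w$1 \<and> v$2 = w$2"
  by (simp add: vec_eq_iff forall_2)

lemma mem_cbox_vec2: "(x::real^2) \<in> cbox u v \<longleftrightarrow> u$1 \<le> x$1 \<and> x$1 \<le> v$1 \<and> u$2 \<le> x$2 \<and> x$2 \<le> v$2"
  by (auto simp: mem_box_cart forall_2)

lemma mem_box_vec2: "(x::real^2) \<in> box u v \<longleftrightarrow> u$1 < x$1 \<and> x$1 < v$1 \<and> u$2 < x$2 \<and> x$2 < v$2"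
  by (auto simp: mem_box_cart forall_2)

lemma vec2_of_complex_inverse [simp]:
  "vec2_of_complex (complex_of_vec2 v) = v" "complex_of_vec2 (vec2_of_complex z) = z"
  by (simp_all add: vec2_of_complex_def complex_of_vec2_def vec2_eq_iff complex_eq_iff)

lemma vec2_of_complex_nth [simp]: "vec2_of_complex z $ 1 = Re z" "vec2_of_complex z $ 2 = Im z"
  by (simp_all add: vec2_of_complex_def)

lemma vec2_of_pair_nth [simp]: "vec2_of_pair x $ 1 = fst x" "vec2_of_pair x $ 2 = snd x"
  by (simp_all add: vec2_of_pair_def)

lemma norm_complex_of_vec2: "norm (complex_of_vec2 v) = norm v"
  by (simp add: complex_of_vec2_def norm_complex_def norm_vec_def L2_set_def sum_2)

lemma linear_vec2_of_complex: "linear vec2_of_complex"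
  by (simp add: linear_iff vec2_of_complex_def vec2_eq_iff)

lemma complex_of_vec2_cbox: "complex_of_vec2 ` cbox u v = cbox (complex_of_vec2 u) (complex_of_vec2 v)"
proof (intro set_eqI iffI)
  fix z
  assume "z \<in> cbox (complex_of_vec2 u) (complex_of_vec2 v)"
  then have "vec2_of_complex z \<in> cbox u v"
    by (auto simp: cbox_complex_eq mem_cbox_vec2 complex_of_vec2_def vec2_of_complex_def)
  then show "z \<in> complex_of_vec2 ` cbox u v"
    by (metis vec2_of_complex_inverse(2) image_eqI)
qed (auto simp: cbox_complex_eq mem_cbox_vec2 complex_of_vec2_def)

lemma vec2_of_complex_cbox: "vec2_of_complex ` cbox u v = cbox (vec2_of_complex u) (vec2_of_complex v)"
proof (intro set_eqI iffI)
  fix x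
  assume "x \<in> cbox (vec2_of_complex u) (vec2_of_complex v)"
  then have "complex_of_vec2 x \<in> cbox u v"
    by (auto simp: cbox_complex_eq mem_cbox_vec2 complex_of_vec2_def vec2_of_complex_def)
  then show "x \<in> vec2_of_complex ` cbox u v"
    by (metis vec2_of_complex_inverse(1) image_eqI)
qed (auto simp: cbox_complex_eq mem_cbox_vec2 vec2_of_complex_def)

lemma vec2_of_pair_cbox: "vec2_of_pair ` cbox u v = cbox (vec2_of_pair u) (vec2_of_pair v)"
proof (intro set_eqI iffI)
  fix x
  assume "x \<in> cbox (vec2_of_pair u) (vec2_of_pair v)"
  then have "(x$1, x$2) \<in> cbox u v"
    by (cases u, cases v) (auto simp: mem_cbox_vec2 cbox_Pair_eq)
  moreover have "x = vec2_of_pair (x$1, x$2)"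
    by (simp add: vec2_eq_iff)
  ultimately show "x \<in> vec2_of_pair ` cbox u v"
    by blast
qed (cases u, cases v, auto simp: mem_cbox_vec2 cbox_Pair_eq)

lemma content_cbox_vec2:
  "measure lborel (cbox u (v::real^2)) = (if u$1 \<le> v$1 \<and> u$2 \<le> v$2 then (v$1 - u$1) * (v$2 - u$2) else 0)"
  by (auto simp: content_cbox_if_cart UNIV_2 mem_cbox_vec2 box_eq_empty(2) mem_box_cart forall_2
      Basis_vec_def cart_eq_inner_axis)

lemma content_cbox_complex:
  "measure lborel (cbox u (v::complex)) = (if Re u \<le> Re v \<and> Im u \<le> Im v then (Re v - Re u) * (Im v - Im u) else 0)"
  by (auto simp: content_cbox_cases Basis_complex_def)

lemma has_integral_complex_of_vec2:
  fixes f :: "complex \<Rightarrow> real"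
  assumes "bounded E" and "((\<lambda>v. f (complex_of_vec2 v)) has_integral i) E"
  shows "(f has_integral i) (complex_of_vec2 ` E)"
proof -
  obtain u v where "E \<subseteq> cbox u v"
    using assms(1) bounded_subset_cbox_symmetric by metis
  let ?g = "\<lambda>x. if x \<in> E then f (complex_of_vec2 x) else 0"
  have "(?g has_integral i) (cbox u v)"
    using assms(2) \<open>E \<subseteq> cbox u v\<close> by simp
  then have "((\<lambda>z. ?g (vec2_of_complex z)) has_integral (1 / 1) *\<^sub>R i) (complex_of_vec2 ` cbox u v)"
    by (rule has_integral_twiddle[where r = 1, rotated -1])
      (auto simp: vec2_of_complex_cbox complex_of_vec2_cbox content_cbox_vec2 content_cbox_complex
        linear_continuous_at linear_conv_bounded_linear[symmetric] linear_vec2_of_complex)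
  moreover have "vec2_of_complex z \<in> E \<longleftrightarrow> z \<in> complex_of_vec2 ` E" for z
    by (metis vec2_of_complex_inverse image_iff)
  ultimately have "((\<lambda>z. if z \<in> complex_of_vec2 ` E then f z else 0) has_integral i)
      (cbox (complex_of_vec2 u) (complex_of_vec2 v))"
    by (simp add: complex_of_vec2_cbox cong: if_cong)
  moreover have "complex_of_vec2 ` E \<subseteq> cbox (complex_of_vec2 u) (complex_of_vec2 v)"
    using \<open>E \<subseteq> cbox u v\<close> complex_of_vec2_cbox by blast
  ultimately show ?thesis
    by simp
qed

lemma nth_pair_image_cbox: "(\<lambda>x::real^2. (x$1, x$2)) ` cbox u v = cbox (u$1, u$2) (v$1, v$2)"
proof (intro set_eqI iffI)
  fix x
  assume "x \<in> cbox (u$1, u$2) (v$1, v$2)"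
  then have "vec2_of_pair x \<in> cbox u v"
    by (cases x) (auto simp: mem_cbox_vec2 cbox_Pair_eq)
  then show "x \<in> (\<lambda>x::real^2. (x$1, x$2)) ` cbox u v"
    by (force intro: image_eqI[of _ _ "vec2_of_pair x"])
qed (auto simp: mem_cbox_vec2 cbox_Pair_eq)

lemma has_integral_box_vec2_Fubini:
  fixes F :: "real \<Rightarrow> real \<Rightarrow> real"
  assumes "continuous_on (cbox (0,0) (1,1)) (\<lambda>x. F (fst x) (snd x))"
  shows "((\<lambda>v::real^2. F (v$1) (v$2)) has_integral integral {0..1} (\<lambda>p. integral {0..1} (F p)))
    (box (vec 0) (vec 1))"
proof -
  let ?F = "\<lambda>x. F (fst x) (snd x)"
  have "(?F has_integral integral {0..1} (\<lambda>p. integral {0..1} (F p))) (cbox (0,0) (1,1))"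
    using integral_prod_continuous[OF assms] integrable_continuous[OF assms]
    by (simp add: has_integral_integral)
  then have "((\<lambda>v. ?F (v$1, v$2)) has_integral (1 / 1) *\<^sub>R integral {0..1} (\<lambda>p. integral {0..1} (F p)))
      (vec2_of_pair ` cbox (0,0) (1,1))"
    by (rule has_integral_twiddle[where r = 1, rotated -1])
      (auto simp: vec2_of_pair_cbox nth_pair_image_cbox vec2_eq_iff content_Pair content_cbox_vec2
        intro!: continuous_intros)
  moreover have "vec2_of_pair (0,0) = vec 0" "vec2_of_pair (1,1) = vec 1"
    by (simp_all add: vec2_eq_iff)
  then have "vec2_of_pair ` cbox (0,0) (1,1) = cbox (vec 0) (vec 1)"
    by (simp only: vec2_of_pair_cbox)
  ultimately show ?thesis
    by (simp add: has_integral_open_interval)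
qed

lemma has_integral_change_of_variables_nonneg:
  fixes g :: "real^'n::{finite,wellorder} \<Rightarrow> real^'n::_" and f :: "real^'n::_ \<Rightarrow> real"
  assumes S: "S \<in> sets lebesgue"
    and deriv: "\<And>x. x \<in> S \<Longrightarrow> (g has_derivative g' x) (at x within S)"
    and inj: "inj_on g S"
    and nonneg: "\<And>x. x \<in> S \<Longrightarrow> 0 \<le> f (g x)"
    and int: "((\<lambda>x. \<bar>det (matrix (g' x))\<bar> * f (g x)) has_integral I) S"
  shows "(f has_integral I) (g ` S)"
proof -
  have "(\<lambda>x. \<bar>det (matrix (g' x))\<bar> * f (g x)) absolutely_integrable_on S"
    using int nonneg by (intro nonnegative_absolutely_integrable_1) auto
  then have "(\<lambda>x. \<bar>det (matrix (g' x))\<bar> *\<^sub>R vec (f (g x)) :: real^1) absolutely_integrable_on S \<and>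
      integral S (\<lambda>x. \<bar>det (matrix (g' x))\<bar> *\<^sub>R vec (f (g x))) = (vec I :: real^1)"
    using int by (simp add: absolutely_integrable_on_1_iff integral_on_1_eq integral_unique)
  then have "(\<lambda>x. vec (f x) :: real^1) absolutely_integrable_on g ` S \<and>
      integral (g ` S) (\<lambda>x. vec (f x)) = (vec I :: real^1)"
    using has_absolute_integral_change_of_variables[OF S deriv inj] by blast
  then show ?thesis
    by (simp add: absolutely_integrable_on_1_iff integral_on_1_eq absolutely_integrable_on_def
        has_integral_integrable_integral)
qed

section \<open>The hyperboloid model\<close>

definition lorentz :: "real^3 \<Rightarrow> real^3 \<Rightarrow> real" where
  "lorentz x y = x$1 * y$1 - x$2 * y$2 - x$3 * y$3"

lemma lorentz_commute: "lorentz x y = lorentz y x"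
  by (simp add: lorentz_def mult.commute)

lemma lorentz_add [simp]:
  "lorentz (x + y) z = lorentz x z + lorentz y z"
  "lorentz x (y + z) = lorentz x y + lorentz x z"
  by (simp_all add: lorentz_def algebra_simps)

lemma lorentz_scaleR [simp]:
  "lorentz (c *\<^sub>R x) y = c * lorentz x y"
  "lorentz x (c *\<^sub>R y) = c * lorentz x y"
  by (simp_all add: lorentz_def algebra_simps)

definition hyperboloid_lift :: "complex \<Rightarrow> real^3" where
  "hyperboloid_lift z = (1 / sqrt (1 - (norm z)\<^sup>2)) *\<^sub>R vector [1, Re z, Im z]"

definition klein_coords :: "real^3 \<Rightarrow> real^2" where
  "klein_coords x = vector [x$2 / x$1, x$3 / x$1]"

lemma one_minus_norm_sq_mult_le:
  fixes x y :: "'a::real_inner"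
  assumes "norm x \<le> 1" "norm y \<le> 1"
  shows "(1 - (norm x)\<^sup>2) * (1 - (norm y)\<^sup>2) \<le> (1 - x \<bullet> y)\<^sup>2"
proof -
  have "x \<bullet> y \<le> norm x * norm y"
    using norm_cauchy_schwarz by blast
  moreover have "norm x * norm y \<le> 1"
    using assms by (simp add: mult_le_one)
  ultimately have "(1 - norm x * norm y)\<^sup>2 \<le> (1 - x \<bullet> y)\<^sup>2"
    by (intro power_mono) auto
  moreover have "(1 - (norm x)\<^sup>2) * (1 - (norm y)\<^sup>2) = (1 - norm x * norm y)\<^sup>2 - (norm x - norm y)\<^sup>2"
    by (simp add: algebra_simps power2_eq_square)
  ultimately show ?thesis
    by (smt (verit) zero_le_power2)
qed

lemma mem_klein_disc_iff: "z \<in> klein_disc \<longleftrightarrow> norm z < 1"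
  by (simp add: klein_disc_def)

lemma norm_sq_less_one: "z \<in> klein_disc \<Longrightarrow> (norm z)\<^sup>2 < 1"
  by (simp add: klein_disc_def abs_square_less_1)

lemma lorentz_hyperboloid_lift:
  assumes "P \<in> klein_disc" "Q \<in> klein_disc"
  shows "lorentz (hyperboloid_lift P) (hyperboloid_lift Q)
    = (1 - P \<bullet> Q) / sqrt ((1 - (norm P)\<^sup>2) * (1 - (norm Q)\<^sup>2))"
proof -
  have "lorentz (vector [1, Re P, Im P]) (vector [1, Re Q, Im Q]) = 1 - P \<bullet> Q"
    by (simp add: lorentz_def inner_complex_def)
  then show ?thesis
    by (simp add: hyperboloid_lift_def real_sqrt_mult)
qed

lemma lorentz_hyperboloid_lift_self:
  "P \<in> klein_disc \<Longrightarrow> lorentz (hyperboloid_lift P) (hyperboloid_lift P) = 1"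
  using norm_sq_less_one[of P]
  by (simp add: lorentz_hyperboloid_lift dot_square_norm)

lemma hyperboloid_lift_pos: "P \<in> klein_disc \<Longrightarrow> 0 < hyperboloid_lift P $ 1"
  using norm_sq_less_one[of P] by (simp add: hyperboloid_lift_def)

lemma klein_coords_hyperboloid_lift:
  "P \<in> klein_disc \<Longrightarrow> complex_of_vec2 (klein_coords (hyperboloid_lift P)) = P"
  using norm_sq_less_one[of P]
  by (simp add: hyperboloid_lift_def klein_coords_def complex_of_vec2_def complex_eq_iff)

lemma cosh_klein_dist:
  assumes "P \<in> klein_disc" "Q \<in> klein_disc"
  shows "cosh (klein_dist P Q) = lorentz (hyperboloid_lift P) (hyperboloid_lift Q)"
proof -
  have "P \<bullet> Q < 1"
    using norm_cauchy_schwarz[of P Q] assms mult_strict_mono[of "norm P" 1 "norm Q" 1]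
    by (simp add: mem_klein_disc_iff)
  have "sqrt ((1 - (norm P)\<^sup>2) * (1 - (norm Q)\<^sup>2)) \<le> sqrt ((1 - P \<bullet> Q)\<^sup>2)"
    using one_minus_norm_sq_mult_le[of P Q] assms
    by (intro real_sqrt_le_mono) (simp add: mem_klein_disc_iff)
  then have "1 \<le> (1 - P \<bullet> Q) / sqrt ((1 - (norm P)\<^sup>2) * (1 - (norm Q)\<^sup>2))"
    using \<open>P \<bullet> Q < 1\<close> norm_sq_less_one[OF assms(1)] norm_sq_less_one[OF assms(2)]
    by simp
  then show ?thesis
    by (simp add: klein_dist_def lorentz_hyperboloid_lift[OF assms])
qed

lemma klein_metric_orthogonal_inner_eq:
  assumes "C \<in> klein_disc" "klein_metric C (A - C) (B - C) = 0"
  shows "(1 - A \<bullet> B) * (1 - (norm C)\<^sup>2) = (1 - A \<bullet> C) * (1 - C \<bullet> B)"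
proof -
  define n u v where "n = 1 - (norm C)\<^sup>2" "u = A - C" "v = B - C"
  have "n \<noteq> 0"
    using norm_sq_less_one[OF assms(1)] by (simp add: n_u_v_def)
  have "(u \<bullet> v) / n + (C \<bullet> u) * (C \<bullet> v) / n\<^sup>2 = 0"
    using assms(2) by (simp add: klein_metric_def n_u_v_def)
  then have "(u \<bullet> v) * n + (C \<bullet> u) * (C \<bullet> v) = 0"
    using \<open>n \<noteq> 0\<close> by (simp add: field_simps power2_eq_square)
  moreover have "A = C + u" "B = C + v" "(norm C)\<^sup>2 = C \<bullet> C"
    by (simp_all add: n_u_v_def dot_square_norm)
  ultimately show ?thesis
    by (simp add: n_u_v_def(1) inner_add_left inner_add_right inner_commute algebra_simps)
qed

text \<open>Hyperbolic Pythagoras: \<open>cosh (dist A B) = cosh (dist A C) * cosh (dist C B)\<close>.\<close>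

lemma lorentz_hyperboloid_lift_right_angle:
  assumes "A \<in> klein_disc" "B \<in> klein_disc" "C \<in> klein_disc"
    and "klein_metric C (A - C) (B - C) = 0"
  shows "lorentz (hyperboloid_lift A) (hyperboloid_lift B)
    = lorentz (hyperboloid_lift A) (hyperboloid_lift C) * lorentz (hyperboloid_lift C) (hyperboloid_lift B)"
proof -
  define nA nB nC where "nA = 1 - (norm A)\<^sup>2" "nB = 1 - (norm B)\<^sup>2" "nC = 1 - (norm C)\<^sup>2"
  have "0 < nA" "0 < nB" "0 < nC"
    using norm_sq_less_one assms(1-3) by (simp_all add: nA_nB_nC_def)
  have "(1 - A \<bullet> B) / sqrt (nA * nB)
      = ((1 - A \<bullet> B) * nC) / (sqrt (nA * nC) * sqrt (nC * nB))"
    using \<open>0 < nA\<close> \<open>0 < nB\<close> \<open>0 < nC\<close> by (simp add: real_sqrt_mult field_simps)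
  also have "\<dots> = (1 - A \<bullet> C) / sqrt (nA * nC) * ((1 - C \<bullet> B) / sqrt (nC * nB))"
    using klein_metric_orthogonal_inner_eq[OF assms(3,4)] by (simp add: nA_nB_nC_def)
  finally show ?thesis
    using assms by (simp add: lorentz_hyperboloid_lift nA_nB_nC_def)
qed

lemma one_minus_norm_klein_coords:
  assumes "0 < x$1"
  shows "1 - (norm (klein_coords x))\<^sup>2 = lorentz x x / (x$1)\<^sup>2"
  using assms by (simp add: klein_coords_def norm_vec_def L2_set_def sum_2 lorentz_def field_simps
      power2_eq_square)

lemma klein_coords_nonneg_combination_in_hull:
  assumes "0 < x$1" "0 < y$1" "0 < z$1" "0 \<le> s" "0 \<le> t" "0 \<le> r" "0 < s + t + r"
  shows "complex_of_vec2 (klein_coords (s *\<^sub>R x + t *\<^sub>R y + r *\<^sub>R z))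
    \<in> convex hull {complex_of_vec2 (klein_coords x), complex_of_vec2 (klein_coords y),
                    complex_of_vec2 (klein_coords z)}"
proof -
  define N where "N = s * x$1 + t * y$1 + r * z$1"
  have "0 < s \<or> 0 < t \<or> 0 < r"
    using assms(4-7) by linarith
  then have "0 < s * x$1 \<or> 0 < t * y$1 \<or> 0 < r * z$1"
    using assms(1-3) by auto
  moreover have "0 \<le> s * x$1" "0 \<le> t * y$1" "0 \<le> r * z$1"
    using assms by simp_all
  ultimately have "0 < N"
    unfolding N_def by linarith
  let ?w = "\<lambda>c v::real^3. c * v$1 / N"
  have "complex_of_vec2 (klein_coords (s *\<^sub>R x + t *\<^sub>R y + r *\<^sub>R z))
      = ?w s x *\<^sub>R complex_of_vec2 (klein_coords x) + ?w t y *\<^sub>R complex_of_vec2 (klein_coords y)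
        + ?w r z *\<^sub>R complex_of_vec2 (klein_coords z)"
    using assms(1-3) by (simp add: klein_coords_def complex_of_vec2_def complex_eq_iff N_def[symmetric]
        add_divide_distrib)
  moreover have "?w s x + ?w t y + ?w r z = 1"
    using \<open>0 < N\<close> by (simp add: N_def add_divide_distrib[symmetric])
  moreover have "0 \<le> ?w s x" "0 \<le> ?w t y" "0 \<le> ?w r z"
    using assms \<open>0 < N\<close> by simp_all
  ultimately show ?thesis
    unfolding convex_hull_3 by blast
qed

section \<open>Area of a right-angled triangle\<close>

lemmas has_derivative_vec_nth [derivative_intros] = bounded_linear.has_derivative[OF bounded_linear_vec_nth]

lemma has_derivative_vector2:
  assumes "(f has_derivative f') F" "(g has_derivative g') F"
  shows "((\<lambda>x. vector [f x, g x] :: real^2) has_derivative (\<lambda>h. vector [f' h, g' h])) F"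
proof -
  have "\<And>u v. (vector [u, v] :: real^2) = u *\<^sub>R axis 1 1 + v *\<^sub>R axis 2 1"
    by (simp add: vec2_eq_iff axis_def)
  then show ?thesis
    by (simp only:) (intro derivative_intros assms)
qed

definition klein_coords_deriv :: "real^3 \<Rightarrow> real^3 \<Rightarrow> real^2" where
  "klein_coords_deriv x h =
    vector [(h$2 * x$1 - x$2 * h$1) / (x$1)\<^sup>2, (h$3 * x$1 - x$3 * h$1) / (x$1)\<^sup>2]"

lemma has_derivative_klein_coords:
  assumes "x$1 \<noteq> 0"
  shows "(klein_coords has_derivative klein_coords_deriv x) (at x)"
  unfolding klein_coords_def[abs_def] klein_coords_deriv_def
  using assms by (auto intro!: has_derivative_vector2 derivative_eq_intros simp: power2_eq_square)

lemma det_matrix_klein_coords_deriv: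
  assumes "x$1 \<noteq> 0"
  shows "det (matrix (\<lambda>h::real^2. klein_coords_deriv x (h$1 *\<^sub>R y + h$2 *\<^sub>R z)))
    = det (vector [x, y, z] :: real^3^3) / (x$1)^3"
  using assms by (simp add: det_2 det_3 matrix_def klein_coords_deriv_def axis_def field_simps
      power2_eq_square power3_eq_cube)

lemma det_rows_linear_combination:
  fixes a c d :: "real^3"
  shows "det (vector [s1 *\<^sub>R a + t1 *\<^sub>R c + r1 *\<^sub>R d, s2 *\<^sub>R a + t2 *\<^sub>R c + r2 *\<^sub>R d,
      s3 *\<^sub>R a + t3 *\<^sub>R c + r3 *\<^sub>R d] :: real^3^3)
    = det (vector [vector [s1, t1, r1], vector [s2, t2, r2], vector [s3, t3, r3]] :: real^3^3)
      * det (vector [a, c, d] :: real^3^3)"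
proof -
  have "(vector [s1 *\<^sub>R a + t1 *\<^sub>R c + r1 *\<^sub>R d, s2 *\<^sub>R a + t2 *\<^sub>R c + r2 *\<^sub>R d,
      s3 *\<^sub>R a + t3 *\<^sub>R c + r3 *\<^sub>R d] :: real^3^3)
    = (vector [vector [s1, t1, r1], vector [s2, t2, r2], vector [s3, t3, r3]] :: real^3^3)
      ** (vector [a, c, d] :: real^3^3)"
    by (simp add: vec_eq_iff forall_3 matrix_matrix_mult_def sum_3)
  then show ?thesis
    by (simp add: det_mul)
qed

lemma det_square_eq_lorentz_gram:
  fixes a c d :: "real^3"
  shows "(det (vector [a, c, d] :: real^3^3))\<^sup>2 = det (vector [
      vector [lorentz a a, lorentz a c, lorentz a d],
      vector [lorentz c a, lorentz c c, lorentz c d],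
      vector [lorentz d a, lorentz d c, lorentz d d]] :: real^3^3)"
  by (simp add: det_3 lorentz_def power2_eq_square) algebra

lemma linear_combination3_unique:
  fixes a c d :: "real^3"
  assumes "det (vector [a, c, d] :: real^3^3) \<noteq> 0"
    and "s *\<^sub>R a + t *\<^sub>R c + r *\<^sub>R d = s' *\<^sub>R a + t' *\<^sub>R c + r' *\<^sub>R d"
  shows "s = s' \<and> t = t' \<and> r = r'"
proof -
  let ?M = "vector [a, c, d] :: real^3^3"
  have comb: "u *\<^sub>R a + v *\<^sub>R c + w *\<^sub>R d = transpose ?M *v vector [u, v, w]" for u v w
    by (simp add: vec_eq_iff forall_3 matrix_vector_mult_def transpose_def sum_3)
  have "invertible (transpose ?M)"
    using assms(1) by (simp add: invertible_det_nz det_transpose)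
  then have "vector [s, t, r] = (vector [s', t', r'] :: real^3)"
    using assms(2) inj_matrix_vector_mult unfolding comb by (metis injD)
  then show ?thesis
    by (simp add: vec_eq_iff forall_3)
qed

lemma klein_coords_eq_imp_parallel:
  assumes "0 < x$1" "0 < y$1" "klein_coords x = klein_coords y"
  shows "y = (y$1 / x$1) *\<^sub>R x"
  using assms by (auto simp: klein_coords_def vec2_eq_iff vec_eq_iff forall_3 field_simps)

text \<open>The points \<open>a\<close>, \<open>c\<close>, \<open>d\<close> of the hyperboloid span a triangle with legs \<open>\<alpha> = dist c a\<close>,
  \<open>\<beta> = dist c d\<close> and right angle at \<open>c\<close> (\<open>lorentz a d = cosh \<alpha> * cosh \<beta>\<close> is Pythagoras).\<close>

locale lorentz_right_triangle =
  fixes a c d :: "real^3" and \<alpha> \<beta> :: real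
  assumes lorentz_aa: "lorentz a a = 1" and lorentz_cc: "lorentz c c = 1"
    and lorentz_dd: "lorentz d d = 1"
    and lorentz_ac: "lorentz a c = cosh \<alpha>" and lorentz_cd: "lorentz c d = cosh \<beta>"
    and lorentz_ad: "lorentz a d = cosh \<alpha> * cosh \<beta>"
    and a_pos: "0 < a$1" and c_pos: "0 < c$1" and d_pos: "0 < d$1"
    and legs_pos: "0 < \<alpha>" "0 < \<beta>"
begin

lemmas lorentz_vertices = lorentz_aa lorentz_cc lorentz_dd lorentz_ac lorentz_cd lorentz_ad
  lorentz_commute[of c a, unfolded lorentz_ac] lorentz_commute[of d a, unfolded lorentz_ad]
  lorentz_commute[of d c, unfolded lorentz_cd]

lemma abs_det_vertices: "\<bar>det (vector [a, c, d] :: real^3^3)\<bar> = sinh \<alpha> * sinh \<beta>"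
proof -
  have "(det (vector [a, c, d] :: real^3^3))\<^sup>2 = ((cosh \<alpha>)\<^sup>2 - 1) * ((cosh \<beta>)\<^sup>2 - 1)"
    unfolding det_square_eq_lorentz_gram
    by (simp add: det_3 lorentz_vertices algebra_simps power2_eq_square)
  also have "\<dots> = (sinh \<alpha> * sinh \<beta>)\<^sup>2"
    by (simp add: cosh_square_eq power_mult_distrib)
  finally show ?thesis
    using legs_pos by (metis abs_of_pos power2_eq_iff_nonneg abs_ge_zero power2_abs sinh_real_pos_iff
        mult_pos_pos)
qed

text \<open>Scaling \<open>c\<close> and \<open>d\<close> to Lorentz product \<open>1\<close> with \<open>a\<close> makes the Lorentz square of
  \<open>param_lift p q\<close> depend only on \<open>p\<close> and \<open>p * q\<close>, so that the pulled-back area density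
  can be integrated in closed form.\<close>

definition param_lift :: "real \<Rightarrow> real \<Rightarrow> real^3" where
  "param_lift p q = (1 - p) *\<^sub>R a + (p * (1 - q) / cosh \<alpha>) *\<^sub>R c + (p * q / (cosh \<alpha> * cosh \<beta>)) *\<^sub>R d"

lemma param_lift_pos:
  assumes "0 \<le> p" "p < 1" "0 \<le> q" "q \<le> 1"
  shows "0 < param_lift p q $ 1"
proof -
  have "0 < (1 - p) * a$1" "0 \<le> p * (1 - q) / cosh \<alpha> * c$1" "0 \<le> p * q / (cosh \<alpha> * cosh \<beta>) * d$1"
    using assms a_pos c_pos d_pos by simp_all
  then show ?thesis
    by (simp add: param_lift_def)
qed

lemma lorentz_param_lift:
  "lorentz (param_lift p q) (param_lift p q)
    = 1 - (tanh \<alpha> * p)\<^sup>2 - (sinh \<beta> / (cosh \<alpha> * cosh \<beta>) * p * q)\<^sup>2"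
proof -
  have "lorentz (param_lift p q) (param_lift p q)
    = (1 - p)\<^sup>2 + (p * (1 - q) / cosh \<alpha>)\<^sup>2 + (p * q / (cosh \<alpha> * cosh \<beta>))\<^sup>2
      + 2 * (1 - p) * (p * (1 - q) / cosh \<alpha>) * cosh \<alpha>
      + 2 * (1 - p) * (p * q / (cosh \<alpha> * cosh \<beta>)) * (cosh \<alpha> * cosh \<beta>)
      + 2 * (p * (1 - q) / cosh \<alpha>) * (p * q / (cosh \<alpha> * cosh \<beta>)) * cosh \<beta>"
    by (simp add: param_lift_def lorentz_vertices) (simp add: field_simps power2_eq_square)
  also have "\<dots> = 1 - p\<^sup>2 + (p / cosh \<alpha>)\<^sup>2 * (1 - q\<^sup>2 + (q / cosh \<beta>)\<^sup>2)"
    by (simp add: field_simps power2_eq_square)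
  also have "\<dots> = 1 - (tanh \<alpha> * p)\<^sup>2 - (sinh \<beta> / (cosh \<alpha> * cosh \<beta>) * p * q)\<^sup>2"
    unfolding tanh_def power_divide power_mult_distrib sinh_square_eq by (simp add: field_simps)
  finally show ?thesis .
qed

lemma tanh_sq_add_sinh_div_sq:
  "(tanh \<alpha>)\<^sup>2 + (sinh \<beta> / (cosh \<alpha> * cosh \<beta>))\<^sup>2 = 1 - 1 / (cosh \<alpha> * cosh \<beta>)\<^sup>2"
  unfolding tanh_def power_divide power_mult_distrib sinh_square_eq by (simp add: field_simps)

lemma lorentz_param_lift_pos:
  assumes "0 \<le> p" "p \<le> 1" "0 \<le> q" "q \<le> 1"
  shows "0 < 1 - (tanh \<alpha> * p)\<^sup>2 - (sinh \<beta> / (cosh \<alpha> * cosh \<beta>) * p * q)\<^sup>2"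
proof -
  define k where "k = sinh \<beta> / (cosh \<alpha> * cosh \<beta>)"
  have "p\<^sup>2 \<le> 1" "(p * q)\<^sup>2 \<le> 1"
    using assms by (simp_all add: power_le_one mult_le_one)
  then have "(tanh \<alpha> * p)\<^sup>2 \<le> (tanh \<alpha>)\<^sup>2" "(k * p * q)\<^sup>2 \<le> k\<^sup>2"
    by (simp_all add: power_mult_distrib mult_left_le mult.assoc)
  moreover have "0 < 1 / (cosh \<alpha> * cosh \<beta>)\<^sup>2"
    by simp
  ultimately show ?thesis
    using tanh_sq_add_sinh_div_sq unfolding k_def by linarith
qed

definition area_density :: "real \<Rightarrow> real \<Rightarrow> real" where
  "area_density p q = sinh \<alpha> * sinh \<beta> / ((cosh \<alpha>)\<^sup>2 * cosh \<beta>) * p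
    / (1 - (tanh \<alpha> * p)\<^sup>2 - (sinh \<beta> / (cosh \<alpha> * cosh \<beta>) * p * q)\<^sup>2) powr (3/2)"

definition param_lift_dp :: "real \<Rightarrow> real^3" where
  "param_lift_dp q = - a + ((1 - q) / cosh \<alpha>) *\<^sub>R c + (q / (cosh \<alpha> * cosh \<beta>)) *\<^sub>R d"

definition param_lift_dq :: "real \<Rightarrow> real^3" where
  "param_lift_dq p = (- p / cosh \<alpha>) *\<^sub>R c + (p / (cosh \<alpha> * cosh \<beta>)) *\<^sub>R d"

lemma has_derivative_param_lift:
  "((\<lambda>v::real^2. param_lift (v$1) (v$2)) has_derivative
    (\<lambda>h. h$1 *\<^sub>R param_lift_dp (v$2) + h$2 *\<^sub>R param_lift_dq (v$1))) (at v)"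
  unfolding param_lift_def[abs_def] param_lift_dp_def param_lift_dq_def
  by (auto intro!: derivative_eq_intros simp: fun_eq_iff algebra_simps diff_divide_distrib add_divide_distrib)

lemma det_param_lift_jacobian:
  "det (vector [param_lift p q, param_lift_dp q, param_lift_dq p] :: real^3^3)
    = p / ((cosh \<alpha>)\<^sup>2 * cosh \<beta>) * det (vector [a, c, d] :: real^3^3)"
proof -
  have rows: "param_lift_dp q = (-1) *\<^sub>R a + ((1 - q) / cosh \<alpha>) *\<^sub>R c + (q / (cosh \<alpha> * cosh \<beta>)) *\<^sub>R d"
    "param_lift_dq p = 0 *\<^sub>R a + (- p / cosh \<alpha>) *\<^sub>R c + (p / (cosh \<alpha> * cosh \<beta>)) *\<^sub>R d"
    by (simp_all add: param_lift_dp_def param_lift_dq_def)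
  show ?thesis
    unfolding param_lift_def rows det_rows_linear_combination
    by (simp add: det_3 field_simps power2_eq_square)
qed

definition param :: "real^2 \<Rightarrow> real^2" where
  "param v = klein_coords (param_lift (v$1) (v$2))"

definition param_deriv :: "real^2 \<Rightarrow> real^2 \<Rightarrow> real^2" where
  "param_deriv v h = klein_coords_deriv (param_lift (v$1) (v$2))
    (h$1 *\<^sub>R param_lift_dp (v$2) + h$2 *\<^sub>R param_lift_dq (v$1))"

lemma param_lift_pos_on_box: "(v::real^2) \<in> box (vec 0) (vec 1) \<Longrightarrow> 0 < param_lift (v$1) (v$2) $ 1"
  by (simp add: mem_box_vec2 param_lift_pos)

lemma has_derivative_param:
  assumes "v \<in> box (vec 0) (vec 1)"
  shows "(param has_derivative param_deriv v) (at v)"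
proof -
  have "(klein_coords has_derivative klein_coords_deriv (param_lift (v$1) (v$2))) (at (param_lift (v$1) (v$2)))"
    using param_lift_pos_on_box[OF assms] by (intro has_derivative_klein_coords) simp
  from has_derivative_compose[OF has_derivative_param_lift this]
  show ?thesis
    by (simp add: param_def[abs_def] param_deriv_def[abs_def])
qed

lemma abs_det_param_deriv_mult_density:
  assumes "v \<in> box (vec 0) (vec 1)"
  shows "\<bar>det (matrix (param_deriv v))\<bar> * (1 / (1 - (norm (param v))\<^sup>2) powr (3/2))
    = area_density (v$1) (v$2)"
proof -
  define p q where "p = v$1" "q = v$2"
  define x0 Q where "x0 = param_lift p q $ 1"
    and "Q = 1 - (tanh \<alpha> * p)\<^sup>2 - (sinh \<beta> / (cosh \<alpha> * cosh \<beta>) * p * q)\<^sup>2"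
  have "0 < p" "0 < x0"
    using assms param_lift_pos_on_box[OF assms] by (simp_all add: p_q_def x0_def Q_def mem_box_vec2)
  have "0 < Q"
    unfolding x0_def Q_def using assms by (intro lorentz_param_lift_pos) (auto simp: p_q_def mem_box_vec2)
  have det: "\<bar>det (matrix (param_deriv v))\<bar> = sinh \<alpha> * sinh \<beta> / ((cosh \<alpha>)\<^sup>2 * cosh \<beta>) * p / x0^3"
    using \<open>0 < p\<close> \<open>0 < x0\<close> unfolding param_deriv_def[abs_def] p_q_def x0_def Q_def
    by (simp add: det_matrix_klein_coords_deriv det_param_lift_jacobian abs_det_vertices abs_mult)
  have "1 - (norm (param v))\<^sup>2 = Q / x0\<^sup>2"
    using \<open>0 < x0\<close> unfolding param_def p_q_def x0_def Q_def
    by (simp add: one_minus_norm_klein_coords lorentz_param_lift)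
  then have "(1 - (norm (param v))\<^sup>2) powr (3/2) = Q powr (3/2) / x0^3"
    using \<open>0 < Q\<close> \<open>0 < x0\<close>
    by (simp add: powr_three_halves real_sqrt_divide power2_eq_square power3_eq_cube)
  then show ?thesis
    using \<open>0 < x0\<close> by (simp add: det area_density_def x0_def Q_def p_q_def[symmetric])
qed

lemma inj_on_param: "inj_on param (box (vec 0) (vec 1))"
proof (rule inj_onI)
  fix v w :: "real^2"
  assume v: "v \<in> box (vec 0) (vec 1)" and w: "w \<in> box (vec 0) (vec 1)" and "param v = param w"
  define p q p' q' where "p = v$1" "q = v$2" "p' = w$1" "q' = w$2"
  define t where "t = param_lift p' q' $ 1 / param_lift p q $ 1"
  have "0 < p"
    using v by (simp add: p_q_p'_q'_def mem_box_vec2)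
  have "param_lift p' q' = t *\<^sub>R param_lift p q"
    using \<open>param v = param w\<close> param_lift_pos_on_box[OF v] param_lift_pos_on_box[OF w]
    unfolding t_def p_q_p'_q'_def param_def by (intro klein_coords_eq_imp_parallel)
  then have "(1 - p') *\<^sub>R a + (p' * (1 - q') / cosh \<alpha>) *\<^sub>R c + (p' * q' / (cosh \<alpha> * cosh \<beta>)) *\<^sub>R d
      = (t * (1 - p)) *\<^sub>R a + (t * (p * (1 - q) / cosh \<alpha>)) *\<^sub>R c + (t * (p * q / (cosh \<alpha> * cosh \<beta>))) *\<^sub>R d"
    unfolding param_lift_def by (simp only: scaleR_add_right scaleR_scaleR)
  moreover have "det (vector [a, c, d] :: real^3^3) \<noteq> 0"
    using abs_det_vertices legs_pos by auto
  ultimately have "1 - p' = t * (1 - p) \<and> p' * (1 - q') / cosh \<alpha> = t * (p * (1 - q) / cosh \<alpha>)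
      \<and> p' * q' / (cosh \<alpha> * cosh \<beta>) = t * (p * q / (cosh \<alpha> * cosh \<beta>))"
    by (intro linear_combination3_unique)
  then have coeffs: "1 - p' = t * (1 - p)" "p' * (1 - q') = t * (p * (1 - q))" "p' * q' = t * (p * q)"
    by (simp_all add: field_simps)
  have "1 = (1 - p') + p' * (1 - q') + p' * q'"
    by (simp add: algebra_simps)
  also have "\<dots> = t * ((1 - p) + p * (1 - q) + p * q)"
    unfolding coeffs by (simp add: algebra_simps)
  finally have "t = 1"
    by (simp add: algebra_simps)
  then show "v = w"
    using coeffs \<open>0 < p\<close> by (simp add: vec2_eq_iff p_q_p'_q'_def)
qed

lemma continuous_on_area_density:
  "continuous_on (cbox (0,0) (1,1)) (\<lambda>x. area_density (fst x) (snd x))"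
proof -
  have "0 < 1 - (tanh \<alpha> * fst x)\<^sup>2 - (sinh \<beta> / (cosh \<alpha> * cosh \<beta>) * fst x * snd x)\<^sup>2"
    if "x \<in> cbox (0::real, 0::real) (1, 1)" for x
    using that by (intro lorentz_param_lift_pos) (auto simp: cbox_Pair_eq)
  then show ?thesis
    unfolding area_density_def by (auto intro!: continuous_intros simp: less_imp_neq[symmetric])
qed

definition tan_angle_a :: real where
  "tan_angle_a = tanh \<beta> / sinh \<alpha>"

lemma tan_angle_a_pos: "0 < tan_angle_a"
  using legs_pos by (simp add: tan_angle_a_def)

lemma tanh_sq_mult_tan_angle_a:
  "(tanh \<alpha>)\<^sup>2 * tan_angle_a\<^sup>2 = (sinh \<beta> / (cosh \<alpha> * cosh \<beta>))\<^sup>2"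
  "tan_angle_a * (tanh \<alpha>)\<^sup>2 = sinh \<alpha> * sinh \<beta> / ((cosh \<alpha>)\<^sup>2 * cosh \<beta>)"
  using legs_pos by (simp_all add: tan_angle_a_def tanh_def power2_eq_square field_simps)

lemma tanh_sq_mult_one_plus_tan_angle_a_sq:
  "(tanh \<alpha>)\<^sup>2 * (1 + tan_angle_a\<^sup>2) = 1 - 1 / (cosh \<alpha> * cosh \<beta>)\<^sup>2"
  using tanh_sq_add_sinh_div_sq tanh_sq_mult_tan_angle_a(1) by (simp add: algebra_simps)

lemma integral_area_density_inner:
  assumes "p \<in> {0..1}"
  shows "integral {0..1} (area_density p) = tan_angle_a * (tanh \<alpha>)\<^sup>2 * p
    / ((1 - (tanh \<alpha>)\<^sup>2 * p\<^sup>2) * sqrt (1 - (tanh \<alpha>)\<^sup>2 * (1 + tan_angle_a\<^sup>2) * p\<^sup>2))"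
proof -
  define k C where "k = sinh \<beta> / (cosh \<alpha> * cosh \<beta>)" and "C = sinh \<alpha> * sinh \<beta> / ((cosh \<alpha>)\<^sup>2 * cosh \<beta>)"
  have "0 < 1 - (tanh \<alpha> * p)\<^sup>2 - (k * p * 1)\<^sup>2"
    using assms unfolding k_def by (intro lorentz_param_lift_pos) auto
  then have "((\<lambda>q. 1 / ((1 - (tanh \<alpha> * p)\<^sup>2) - (k * p)\<^sup>2 * q\<^sup>2) powr (3/2)) has_integral
      1 / ((1 - (tanh \<alpha> * p)\<^sup>2) * sqrt ((1 - (tanh \<alpha> * p)\<^sup>2) - (k * p)\<^sup>2))) {0..1}"
    by (intro has_integral_inv_powr_three_halves) auto
  moreover have "area_density p = (\<lambda>q. C * p * (1 / ((1 - (tanh \<alpha> * p)\<^sup>2) - (k * p)\<^sup>2 * q\<^sup>2) powr (3/2)))"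
    by (simp add: fun_eq_iff area_density_def C_def k_def power_mult_distrib power_divide mult_ac)
  ultimately have "(area_density p has_integral
      C * p * (1 / ((1 - (tanh \<alpha> * p)\<^sup>2) * sqrt ((1 - (tanh \<alpha> * p)\<^sup>2) - (k * p)\<^sup>2)))) {0..1}"
    by (simp only: has_integral_mult_right)
  moreover have "(tanh \<alpha>)\<^sup>2 * tan_angle_a\<^sup>2 = k\<^sup>2" "tan_angle_a * (tanh \<alpha>)\<^sup>2 = C"
    unfolding k_def C_def by (fact tanh_sq_mult_tan_angle_a)+
  ultimately show ?thesis
    by (simp add: integral_unique power_mult_distrib algebra_simps)
qed

lemma has_integral_area_density:
  "((\<lambda>v::real^2. area_density (v$1) (v$2)) has_integral 2 * arctan (tanh (\<alpha>/2) * tanh (\<beta>/2)))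
    (box (vec 0) (vec 1))"
proof -
  let ?m = tan_angle_a
  have "integral {0..1} (\<lambda>p. integral {0..1} (area_density p))
      = integral {0..1} (\<lambda>p. ?m * (tanh \<alpha>)\<^sup>2 * p
          / ((1 - (tanh \<alpha>)\<^sup>2 * p\<^sup>2) * sqrt (1 - (tanh \<alpha>)\<^sup>2 * (1 + ?m\<^sup>2) * p\<^sup>2)))"
    by (rule integral_cong) (rule integral_area_density_inner)
  also have "\<dots> = arctan (1 / ?m) - arctan (sqrt (1 - (tanh \<alpha>)\<^sup>2 * (1 + ?m\<^sup>2)) / ?m)"
    using tanh_sq_mult_one_plus_tan_angle_a_sq tan_angle_a_pos legs_pos
    by (intro integral_unique has_integral_arctan_primitive) auto
  also have "\<dots> = arctan (sinh \<alpha> * cosh \<beta> / sinh \<beta>) - arctan (sinh \<alpha> / (cosh \<alpha> * sinh \<beta>))"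
  proof -
    have "sqrt (1 - (tanh \<alpha>)\<^sup>2 * (1 + ?m\<^sup>2)) = 1 / (cosh \<alpha> * cosh \<beta>)"
      unfolding tanh_sq_mult_one_plus_tan_angle_a_sq by (simp add: real_sqrt_divide)
    then have "sqrt (1 - (tanh \<alpha>)\<^sup>2 * (1 + ?m\<^sup>2)) / ?m = sinh \<alpha> / (cosh \<alpha> * sinh \<beta>)"
      using legs_pos by (simp add: tan_angle_a_def tanh_def field_simps)
    moreover have "1 / ?m = sinh \<alpha> * cosh \<beta> / sinh \<beta>"
      by (simp add: tan_angle_a_def tanh_def)
    ultimately show ?thesis
      by (simp only:)
  qed
  also have "\<dots> = 2 * arctan (tanh (\<alpha>/2) * tanh (\<beta>/2))"
    using legs_pos by (rule arctan_right_triangle_identity)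
  finally show ?thesis
    using has_integral_box_vec2_Fubini[OF continuous_on_area_density] by simp
qed

lemma norm_param_less_one:
  assumes "v \<in> box (vec 0) (vec 1)"
  shows "norm (param v) < 1"
proof -
  have "0 < 1 - (tanh \<alpha> * v$1)\<^sup>2 - (sinh \<beta> / (cosh \<alpha> * cosh \<beta>) * v$1 * v$2)\<^sup>2"
    using assms by (intro lorentz_param_lift_pos) (auto simp: mem_box_vec2)
  then have "0 < 1 - (norm (param v))\<^sup>2"
    using param_lift_pos_on_box[OF assms]
    by (simp add: param_def one_minus_norm_klein_coords lorentz_param_lift)
  then show ?thesis
    by (simp add: abs_square_less_1)
qed

lemma param_in_convex_hull:
  assumes "d = \<sigma> *\<^sub>R c + \<tau> *\<^sub>R e" "0 \<le> \<sigma>" "0 \<le> \<tau>" "0 < e$1"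
    and "v \<in> box (vec 0) (vec 1)"
  shows "complex_of_vec2 (param v) \<in> convex hull {complex_of_vec2 (klein_coords a),
    complex_of_vec2 (klein_coords c), complex_of_vec2 (klein_coords e)}"
proof -
  define u w where "u = v$1 * (1 - v$2) / cosh \<alpha>" and "w = v$1 * v$2 / (cosh \<alpha> * cosh \<beta>)"
  have "v$1 < 1" "0 \<le> u" "0 \<le> w"
    using assms(5) by (simp_all add: mem_box_vec2 u_def w_def)
  have "param_lift (v$1) (v$2) = (1 - v$1) *\<^sub>R a + (u + w * \<sigma>) *\<^sub>R c + (w * \<tau>) *\<^sub>R e"
    unfolding param_lift_def by (simp add: u_def w_def assms(1) algebra_simps)
  then show ?thesis
    unfolding param_def using \<open>v$1 < 1\<close> \<open>0 \<le> u\<close> \<open>0 \<le> w\<close> assms(2-4) a_pos c_pos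
    by (simp add: klein_coords_nonneg_combination_in_hull add_pos_nonneg)
qed

lemma has_integral_param_image:
  "((\<lambda>w::real^2. 1 / (1 - (norm w)\<^sup>2) powr (3/2)) has_integral 2 * arctan (tanh (\<alpha>/2) * tanh (\<beta>/2)))
    (param ` box (vec 0) (vec 1))"
proof (rule has_integral_change_of_variables_nonneg)
  show "box (vec 0) (vec 1) \<in> sets lebesgue"
    by simp
  show "(param has_derivative param_deriv v) (at v within box (vec 0) (vec 1))"
    if "v \<in> box (vec 0) (vec 1)" for v
    using has_derivative_param[OF that] by (rule has_derivative_at_withinI)
  show "((\<lambda>v. \<bar>det (matrix (param_deriv v))\<bar> * (1 / (1 - (norm (param v))\<^sup>2) powr (3/2)))
      has_integral 2 * arctan (tanh (\<alpha>/2) * tanh (\<beta>/2))) (box (vec 0) (vec 1))"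
    using has_integral_area_density
    by (rule has_integral_cong[THEN iffD2, rotated]) (rule abs_det_param_deriv_mult_density)
  show "0 \<le> 1 / (1 - (norm (param v))\<^sup>2) powr (3/2)" for v
    by simp
qed (rule inj_on_param)

end

lemma sinh_geodesic_split:
  fixes x y :: real
  assumes "0 \<le> x" "0 < y"
  shows "sinh x / sinh (x + y) + sinh y / sinh (x + y) * cosh (x + y) = cosh y"
    and "(sinh x / sinh (x + y))\<^sup>2 + 2 * (sinh x / sinh (x + y)) * (sinh y / sinh (x + y)) * cosh (x + y)
      + (sinh y / sinh (x + y))\<^sup>2 = 1"
proof -
  define S where "S = sinh (x + y)"
  have "0 < S"
    using assms by (simp add: S_def)
  have sx: "sinh x = S * cosh y - cosh (x + y) * sinh y"
    using sinh_diff[of "x + y" y] by (simp add: S_def)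
  then show "sinh x / S + sinh y / S * cosh (x + y) = cosh y"
    using \<open>0 < S\<close> by (simp add: field_simps)
  have "(cosh (x + y))\<^sup>2 = S\<^sup>2 + 1" "(cosh y)\<^sup>2 = (sinh y)\<^sup>2 + 1"
    by (simp_all add: S_def cosh_square_eq)
  then have "(sinh x)\<^sup>2 + 2 * sinh x * sinh y * cosh (x + y) + (sinh y)\<^sup>2 = S\<^sup>2"
    unfolding sx by algebra
  then show "(sinh x / S)\<^sup>2 + 2 * (sinh x / S) * (sinh y / S) * cosh (x + y) + (sinh y / S)\<^sup>2 = 1"
    using \<open>0 < S\<close> by (simp add: field_simps power2_eq_square)
qed

lemma hyp_area_ge_integral_subset:
  assumes "A \<in> klein_disc" "B \<in> klein_disc" "C \<in> klein_disc"
    and "((\<lambda>z. 1 / (1 - (norm z)\<^sup>2) powr (3/2)) has_integral V) S" "S \<subseteq> hyp_triangle A B C"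
  shows "V \<le> hyp_area (hyp_triangle A B C)"
proof -
  let ?T = "hyp_triangle A B C" and ?f = "\<lambda>z::complex. 1 / (1 - (norm z)\<^sup>2) powr (3/2)"
  have "compact ?T"
    unfolding hyp_triangle_def by (rule finite_imp_compact_convex_hull) simp
  have "?T \<subseteq> klein_disc"
    unfolding hyp_triangle_def klein_disc_def using assms(1-3)
    by (intro hull_minimal) (auto simp: klein_disc_def convex_ball)
  then have inside: "(norm z)\<^sup>2 < 1" if "z \<in> ?T" for z
    using that norm_sq_less_one by blast
  then have "continuous_on ?T ?f"
    by (intro continuous_intros) (fastforce dest: inside)+
  then have "integrable lborel (\<lambda>z. indicator ?T z *\<^sub>R ?f z)"
    using \<open>compact ?T\<close> by (rule borel_integrable_compact[rotated])
  then have "(\<lambda>z. indicator ?T z *\<^sub>R ?f z) integrable_on UNIV"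
    by (rule integrable_on_lborel)
  moreover have "(\<lambda>z. indicator ?T z *\<^sub>R ?f z) = (\<lambda>z. if z \<in> ?T then ?f z else 0)"
    by (simp add: fun_eq_iff)
  ultimately have "?f integrable_on ?T"
    by (simp add: integrable_restrict_UNIV)
  then have "integral S ?f \<le> integral ?T ?f"
    using assms(4,5) by (intro integral_subset_le) auto
  then show ?thesis
    using assms(4) by (simp add: hyp_area_def integral_unique)
qed

text \<open>The combination of \<open>c\<close> and \<open>e\<close> below is the point at distance \<open>\<beta>\<close> from \<open>c\<close> on the
  geodesic segment from \<open>c\<close> to \<open>e\<close>.\<close>

lemma lorentz_right_triangle_on_leg:
  assumes "lorentz a a = 1" "lorentz c c = 1" "lorentz e e = 1"
    and "lorentz a c = cosh \<alpha>" "lorentz c e = cosh b" "lorentz a e = cosh \<alpha> * cosh b"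
    and "0 < a$1" "0 < c$1" "0 < e$1" "0 < \<alpha>" "0 < \<beta>" "\<beta> \<le> b"
  shows "lorentz_right_triangle a c ((sinh (b - \<beta>) / sinh b) *\<^sub>R c + (sinh \<beta> / sinh b) *\<^sub>R e) \<alpha> \<beta>"
proof
  define \<sigma> \<tau> where "\<sigma> = sinh (b - \<beta>) / sinh b" and "\<tau> = sinh \<beta> / sinh b"
  have "0 \<le> \<sigma>" "0 < \<tau>"
    using assms by (simp_all add: \<sigma>_def \<tau>_def)
  have split: "\<sigma> + \<tau> * cosh b = cosh \<beta>" "\<sigma>\<^sup>2 + 2 * \<sigma> * \<tau> * cosh b + \<tau>\<^sup>2 = 1"
    using sinh_geodesic_split[of "b - \<beta>" \<beta>] assms by (simp_all add: \<sigma>_def \<tau>_def)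
  show "lorentz (\<sigma> *\<^sub>R c + \<tau> *\<^sub>R e) (\<sigma> *\<^sub>R c + \<tau> *\<^sub>R e) = 1"
    using split(2) assms(2,3,5) by (simp add: lorentz_commute[of e c] algebra_simps power2_eq_square)
  show "lorentz c (\<sigma> *\<^sub>R c + \<tau> *\<^sub>R e) = cosh \<beta>"
    using split(1) assms(2,5) by simp
  show "lorentz a (\<sigma> *\<^sub>R c + \<tau> *\<^sub>R e) = cosh \<alpha> * cosh \<beta>"
    using split(1)[symmetric] assms(4,6) by (simp add: algebra_simps)
  show "0 < (\<sigma> *\<^sub>R c + \<tau> *\<^sub>R e) $ 1"
    using \<open>0 \<le> \<sigma>\<close> \<open>0 < \<tau>\<close> assms(8,9) by (simp add: add_nonneg_pos)
qed (use assms in auto)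

lemma two_arctan_le_hyp_area_right_triangle:
  assumes disc: "A \<in> klein_disc" "B \<in> klein_disc" "C \<in> klein_disc"
    and dist: "klein_dist C A = \<alpha>" "klein_dist C B = b"
    and right: "klein_metric C (A - C) (B - C) = 0"
    and "0 < \<alpha>" "0 < \<beta>" "\<beta> \<le> b"
  shows "2 * arctan (tanh (\<alpha>/2) * tanh (\<beta>/2)) \<le> hyp_area (hyp_triangle A B C)"
proof -
  define a c e where "a = hyperboloid_lift A" and "c = hyperboloid_lift C" and "e = hyperboloid_lift B"
  define d where "d = (sinh (b - \<beta>) / sinh b) *\<^sub>R c + (sinh \<beta> / sinh b) *\<^sub>R e"
  have lift_pos: "0 < a$1" "0 < c$1" "0 < e$1"
    using disc by (simp_all add: a_def c_def e_def hyperboloid_lift_pos)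
  have lorentz_ca: "lorentz c a = cosh \<alpha>" and lorentz_ce: "lorentz c e = cosh b"
    using cosh_klein_dist[OF disc(3,1)] cosh_klein_dist[OF disc(3,2)] dist
    by (simp_all add: a_def c_def e_def)
  have "lorentz a e = cosh \<alpha> * cosh b"
    using lorentz_hyperboloid_lift_right_angle[OF disc right] lorentz_ca lorentz_ce
    by (simp add: a_def c_def e_def lorentz_commute)
  then interpret right_triangle: lorentz_right_triangle a c d \<alpha> \<beta>
    unfolding d_def using lift_pos lorentz_ca lorentz_ce disc assms(7-9)
    by (intro lorentz_right_triangle_on_leg)
      (simp_all add: a_def c_def e_def lorentz_hyperboloid_lift_self lorentz_commute)
  let ?S = "right_triangle.param ` box (vec 0) (vec 1)"
  have "complex_of_vec2 ` ?S \<subseteq> hyp_triangle A B C"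
    using right_triangle.param_in_convex_hull[OF d_def _ _ lift_pos(3)] disc assms(8,9)
    by (auto simp: hyp_triangle_def insert_commute a_def c_def e_def klein_coords_hyperboloid_lift)
  moreover have "bounded ?S"
    using right_triangle.norm_param_less_one by (intro bounded_subset[OF bounded_ball[of 0 1]]) auto
  then have "((\<lambda>z. 1 / (1 - (norm z)\<^sup>2) powr (3/2)) has_integral 2 * arctan (tanh (\<alpha>/2) * tanh (\<beta>/2)))
      (complex_of_vec2 ` ?S)"
    using right_triangle.has_integral_param_image
    by (intro has_integral_complex_of_vec2) (simp_all add: norm_complex_of_vec2)
  ultimately show ?thesis
    using disc by (intro hyp_area_ge_integral_subset)
qed

theorem lemma15:
  fixes a b :: real and A B C :: complex
  assumes "0 < a" "a \<le> 1.8" "0 < b"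
    and "A \<in> klein_disc" "B \<in> klein_disc" "C \<in> klein_disc"
    and "klein_dist C A = a" "klein_dist C B = b"
    and "klein_metric C (A - C) (B - C) = 0"
  shows "hyp_area (hyp_triangle A B C) \<ge> a / 5 * min b pi"
proof -
  have "0 < min b pi" "min b pi \<le> b" "min b pi \<le> pi"
    using assms(3) by auto
  then have "a * min b pi / 5 \<le> 2 * arctan (tanh (a/2) * tanh (min b pi / 2))"
    using assms(1,2) by (intro two_arctan_tanh_product_ge) auto
  also have "\<dots> \<le> hyp_area (hyp_triangle A B C)"
    using assms \<open>0 < min b pi\<close> \<open>min b pi \<le> b\<close> by (intro two_arctan_le_hyp_area_right_triangle) auto
  finally show ?thesis
    by simp
qed

end
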